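(* In the private-signal market described in the context, suppose that for every full-support prior $\mu_0$ the limit belief satisfies $\tilde{\mu}(\omega)\in\{0,1\}$ for all $\omega\in\Omega$. Then if $\tilde{\mu}(\omega^* )=1$, $\omega^*$ is the true value of the asset.
   Context: Model (private signal case). The value $\omega$ of an asset lies in a finite set $\Omega\subset\mathbb{R}$; common full-support prior $\mu_0$. Signals lie in $\mathbb{S}\subseteq\mathbb{R}$ with conditional densities $f(s\mid\omega)$, $0<f(s\mid\omega)<\infty$. At each date $t\ge1$ one agent arrives: independently, with fixed known probability $q\in(0,1)$ a noise agent who buys, sells or does not trade with probability $1/3$ each, otherwise an informative agent who privately observes $s_t\sim f(\cdot\mid\omega)$, i.i.d. given $\omega$. Public history $H_t=(a_1,\dots,a_{t-1})$. Market makers post $ask_t,bid_t$ with zero expected profit on a buy/sell. An informative agent buys if $E[\omega\mid s_t,H_t]>ask_t$, sells if $E[\omega\mid s_t,H_t]<bid_t$, otherwise no trade. The public belief $\mu_t$ is the Bayesian posterior of $\mu_0$ given $H_t$; the limit belief is $\tilde{\mu}(\omega)=\lim_{t\to\infty}\mu_t(\omega)$ (almost sure limit). *)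

theory Defs
  imports "HOL-Probability.Probability"
begin

datatype act = Buy | Sell | NoTrade

text \<open>A market: value set Omega, signal set S, signal densities f(s|w) (w.r.t. Lebesgue
 measure), noise probability q, and the market makers' pricing rules ask/bid, which
 depend on the common prior and on the public history.  Histories are stored as lists
 with the most recent action first.\<close>
record mkt =
  Om :: "real set"
  Sg :: "real set"
  fd :: "real \<Rightarrow> real \<Rightarrow> real"   (* fd M s w = f(s | w) *)
  qn :: real
  askf :: "(real \<Rightarrow> real) \<Rightarrow> act list \<Rightarrow> real"
  bidf :: "(real \<Rightarrow> real) \<Rightarrow> act list \<Rightarrow> real"

definition full_support :: "real set \<Rightarrow> (real \<Rightarrow> real) \<Rightarrow> bool" where
  "full_support \<Omega> \<mu> \<longleftrightarrow> (\<forall>w\<in>\<Omega>. 0 < \<mu> w) \<and> (\<Sum>w\<in>\<Omega>. \<mu> w) = 1"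

definition post_mean :: "mkt \<Rightarrow> (real \<Rightarrow> real) \<Rightarrow> real \<Rightarrow> real" where
  "post_mean M \<mu> s = (\<Sum>w\<in>Om M. w * \<mu> w * fd M s w) / (\<Sum>w\<in>Om M. \<mu> w * fd M s w)"

definition informed_act :: "real \<Rightarrow> real \<Rightarrow> real \<Rightarrow> act" where
  "informed_act v a b = (if v > a then Buy else if v < b then Sell else NoTrade)"

definition inf_prob :: "mkt \<Rightarrow> (real \<Rightarrow> real) \<Rightarrow> real \<Rightarrow> real \<Rightarrow> act \<Rightarrow> real \<Rightarrow> real" where
  "inf_prob M \<mu> a b x w =
     (LINT s:{s\<in>Sg M. informed_act (post_mean M \<mu> s) a b = x}|lborel. fd M s w)"

definition act_prob :: "mkt \<Rightarrow> (real \<Rightarrow> real) \<Rightarrow> real \<Rightarrow> real \<Rightarrow> act \<Rightarrow> real \<Rightarrow> real" where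
  "act_prob M \<mu> a b x w = qn M / 3 + (1 - qn M) * inf_prob M \<mu> a b x w"

fun belief :: "mkt \<Rightarrow> (real \<Rightarrow> real) \<Rightarrow> act list \<Rightarrow> real \<Rightarrow> real" where
  "belief M \<mu>0 [] = \<mu>0"
| "belief M \<mu>0 (x # h) =
     (let \<mu> = belief M \<mu>0 h;
          p = act_prob M \<mu> (askf M \<mu>0 h) (bidf M \<mu>0 h) x
      in (\<lambda>w. \<mu> w * p w / (\<Sum>w'\<in>Om M. \<mu> w' * p w')))"

definition zero_profit :: "mkt \<Rightarrow> bool" where
  "zero_profit M \<longleftrightarrow> (\<forall>\<mu>0 h. full_support (Om M) \<mu>0 \<longrightarrow>
     (let \<mu> = belief M \<mu>0 h; pa = askf M \<mu>0 h; pb = bidf M \<mu>0 h;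
          P = (\<lambda>x w. act_prob M \<mu> pa pb x w)
      in pa = (\<Sum>w\<in>Om M. w * \<mu> w * P Buy w) / (\<Sum>w\<in>Om M. \<mu> w * P Buy w) \<and>
         pb = (\<Sum>w\<in>Om M. w * \<mu> w * P Sell w) / (\<Sum>w\<in>Om M. \<mu> w * P Sell w)))"

definition market_model :: "mkt \<Rightarrow> bool" where
  "market_model M \<longleftrightarrow> finite (Om M) \<and> Om M \<noteq> {} \<and> 0 < qn M \<and> qn M < 1 \<and>
     Sg M \<in> sets borel \<and>
     (\<forall>w\<in>Om M. (\<lambda>s. fd M s w) \<in> borel_measurable borel \<and> (\<forall>s\<in>Sg M. 0 < fd M s w) \<and>
        set_integrable lborel (Sg M) (\<lambda>s. fd M s w) \<and> (LINT s:Sg M|lborel. fd M s w) = 1) \<and>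
     zero_profit M"

text \<open>Per-date primitives given the true value w: (noise agent?, noise action), signal.
  Noise agent with probability q, noise action uniform on the three actions,
  signal with density f(. | w) on S.\<close>
definition date_meas :: "mkt \<Rightarrow> real \<Rightarrow> ((bool \<times> act) \<times> real) measure" where
  "date_meas M w =
     measure_pmf (pair_pmf (bernoulli_pmf (qn M)) (pmf_of_set {Buy, Sell, NoTrade}))
     \<Otimes>\<^sub>M density lborel (\<lambda>s. ennreal (indicator (Sg M) s * fd M s w))"

definition date_act :: "mkt \<Rightarrow> (real \<Rightarrow> real) \<Rightarrow> act list \<Rightarrow> (bool \<times> act) \<times> real \<Rightarrow> act" where
  "date_act M \<mu>0 h x = (case x of ((noise, na), s) \<Rightarrow>
     if noise then na
     else informed_act (post_mean M (belief M \<mu>0 h) s) (askf M \<mu>0 h) (bidf M \<mu>0 h))"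

fun hist :: "mkt \<Rightarrow> (real \<Rightarrow> real) \<Rightarrow> ((bool \<times> act) \<times> real) stream \<Rightarrow> nat \<Rightarrow> act list" where
  "hist M \<mu>0 xs 0 = []"
| "hist M \<mu>0 xs (Suc n) = date_act M \<mu>0 (hist M \<mu>0 xs n) (xs !! n) # hist M \<mu>0 xs n"

text \<open>pub_belief M mu0 xs n = mu_{n+1}, the public belief after n actions.\<close>
definition pub_belief :: "mkt \<Rightarrow> (real \<Rightarrow> real) \<Rightarrow> ((bool \<times> act) \<times> real) stream \<Rightarrow> nat \<Rightarrow> real \<Rightarrow> real" where
  "pub_belief M \<mu>0 xs n = belief M \<mu>0 (hist M \<mu>0 xs n)"

end

theory Submission
  imports Defs
begin

text \<open>Under the true value \<open>w\<close>, the likelihood ratio \<open>\<mu>\<^sub>t(w\<^sup>*) / \<mu>\<^sub>t(w)\<close> of the public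
  belief is a nonnegative martingale: one Bayesian update multiplies it by \<open>P(a | w\<^sup>*) / P(a | w)\<close>,
  whose expectation under \<open>P(\<cdot> | w)\<close> is \<open>1\<close>. By Fatou's lemma its liminf is almost surely finite.
  If \<open>\<mu>\<^sub>t(w\<^sup>*) \<rightarrow> 1\<close> with \<open>w\<^sup>* \<noteq> w\<close>, then \<open>\<mu>\<^sub>t(w) \<le> 1 - \<mu>\<^sub>t(w\<^sup>*) \<rightarrow> 0\<close> and the ratio diverges,
  which can therefore only happen on a null set.\<close>

lemma inf_prob_nonneg:
  assumes "market_model M" "v \<in> Om M"
  shows "0 \<le> inf_prob M \<mu> a b x v"
  unfolding inf_prob_def set_lebesgue_integral_def
  using assms unfolding market_model_def
  by (intro integral_nonneg_AE AE_I2) (auto simp: indicator_def less_imp_le)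

lemma act_prob_pos:
  assumes M: "market_model M" and v: "v \<in> Om M"
  shows "0 < act_prob M \<mu> a b x v"
proof -
  have "0 \<le> (1 - qn M) * inf_prob M \<mu> a b x v"
    using M inf_prob_nonneg[OF M v] unfolding market_model_def by auto
  then show ?thesis using M unfolding market_model_def act_prob_def by linarith
qed

lemma sum_mult_act_prob_pos:
  assumes M: "market_model M" and pos: "\<And>v. v \<in> Om M \<Longrightarrow> 0 < \<mu> v"
  shows "0 < (\<Sum>v\<in>Om M. \<mu> v * act_prob M \<mu>' A B x v)"
  using M pos act_prob_pos[OF M] by (intro sum_pos) (auto simp: market_model_def)

lemma belief_pos:
  assumes M: "market_model M" and \<mu>0: "full_support (Om M) \<mu>0" and u: "u \<in> Om M"
  shows "0 < belief M \<mu>0 h u"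
  using u
proof (induction h arbitrary: u)
  case Nil
  then show ?case using \<mu>0 by (simp add: full_support_def)
next
  case (Cons x h)
  then show ?case
    using sum_mult_act_prob_pos[OF M Cons.IH] act_prob_pos[OF M Cons.prems]
    by (simp add: Let_def)
qed

lemma sum_belief:
  assumes M: "market_model M" and \<mu>0: "full_support (Om M) \<mu>0"
  shows "(\<Sum>u\<in>Om M. belief M \<mu>0 h u) = 1"
proof (cases h)
  case Nil
  then show ?thesis using \<mu>0 by (simp add: full_support_def)
next
  case (Cons x h')
  then show ?thesis
    using sum_mult_act_prob_pos[where \<mu> = "belief M \<mu>0 h'", OF M belief_pos[OF M \<mu>0],
        THEN dual_order.strict_implies_not_eq]
    by (simp add: Let_def sum_divide_distrib[symmetric])
qed

lemma belief_add_le_1: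
  assumes M: "market_model M" and \<mu>0: "full_support (Om M) \<mu>0"
    and "u \<in> Om M" "v \<in> Om M" "u \<noteq> v"
  shows "belief M \<mu>0 h u + belief M \<mu>0 h v \<le> 1"
proof -
  have "(\<Sum>w\<in>{u, v}. belief M \<mu>0 h w) \<le> (\<Sum>w\<in>Om M. belief M \<mu>0 h w)"
    using assms belief_pos[OF M \<mu>0]
    by (intro sum_mono2) (auto simp: market_model_def less_imp_le)
  then show ?thesis using \<open>u \<noteq> v\<close> sum_belief[OF M \<mu>0] by simp
qed

definition signal_meas :: "mkt \<Rightarrow> real \<Rightarrow> real measure" where
  "signal_meas M v = density lborel (\<lambda>s. ennreal (indicator (Sg M) s * fd M s v))"

lemma borel_measurable_post_mean:
  assumes "market_model M"
  shows "post_mean M \<mu> \<in> borel_measurable borel"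
proof -
  have "(\<lambda>s. fd M s w) \<in> borel_measurable borel" if "w \<in> Om M" for w
    using assms that by (auto simp: market_model_def)
  then show ?thesis
    unfolding post_mean_def
    by (intro borel_measurable_divide borel_measurable_sum borel_measurable_times) auto
qed

lemma measurable_informed_act_post_mean:
  assumes "market_model M"
  shows "(\<lambda>s. informed_act (post_mean M \<mu> s) A B) \<in> borel \<rightarrow>\<^sub>M count_space UNIV"
proof -
  have "(\<lambda>v::real. informed_act v A B) \<in> borel \<rightarrow>\<^sub>M count_space UNIV"
    unfolding informed_act_def by measurable
  then show ?thesis using borel_measurable_post_mean[OF assms] by (rule measurable_compose[rotated])
qed

lemma sets_informed_act_eq:
  assumes "market_model M"
  shows "{s. informed_act (post_mean M \<mu> s) A B = a} \<in> sets borel"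
  using measurable_sets[OF measurable_informed_act_post_mean[OF assms], of "{a}"] by (simp add: vimage_def)

lemma emeasure_signal_meas:
  assumes M: "market_model M" and v: "v \<in> Om M" and X: "X \<in> sets borel"
  shows "emeasure (signal_meas M v) X = ennreal (LINT s:(X \<inter> Sg M)|lborel. fd M s v)"
proof -
  have Sg: "Sg M \<in> sets borel" and fm: "(\<lambda>s. fd M s v) \<in> borel_measurable borel"
    and fp: "\<forall>s\<in>Sg M. 0 < fd M s v" and fi: "set_integrable lborel (Sg M) (\<lambda>s. fd M s v)"
    using M v by (auto simp: market_model_def)
  have fi': "set_integrable lborel (X \<inter> Sg M) (\<lambda>s. fd M s v)"
    by (rule set_integrable_subset[OF fi]) (use X Sg in auto)
  have "emeasure (signal_meas M v) X
      = (\<integral>\<^sup>+s. ennreal (indicator (Sg M) s * fd M s v) * indicator X s \<partial>lborel)"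
    unfolding signal_meas_def using X Sg fm by (subst emeasure_density) auto
  also have "\<dots> = (\<integral>\<^sup>+s. ennreal (indicator (X \<inter> Sg M) s * fd M s v) \<partial>lborel)"
    by (intro nn_integral_cong) (auto simp: indicator_def)
  also have "\<dots> = ennreal (LINT s:(X \<inter> Sg M)|lborel. fd M s v)"
    using fi' fp unfolding set_lebesgue_integral_def set_integrable_def real_scaleR_def
    by (intro nn_integral_eq_integral) (auto simp: indicator_def less_imp_le)
  finally show ?thesis .
qed

lemma prob_space_signal_meas:
  assumes M: "market_model M" and v: "v \<in> Om M"
  shows "prob_space (signal_meas M v)"
proof
  have "emeasure (signal_meas M v) UNIV = ennreal (LINT s:Sg M|lborel. fd M s v)"
    using emeasure_signal_meas[OF M v, of UNIV] by simp
  also have "\<dots> = 1" using M v by (simp add: market_model_def)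
  finally show "emeasure (signal_meas M v) (space (signal_meas M v)) = 1"
    by (simp add: signal_meas_def)
qed

lemma emeasure_signal_meas_informed_act:
  assumes M: "market_model M" and v: "v \<in> Om M"
  shows "emeasure (signal_meas M v) {s. informed_act (post_mean M \<mu> s) A B = a}
       = ennreal (inf_prob M \<mu> A B a v)"
  unfolding inf_prob_def emeasure_signal_meas[OF M v sets_informed_act_eq[OF M]]
  by (simp add: Int_def conj_commute)

lemma UNIV_act: "(UNIV :: act set) = {Buy, Sell, NoTrade}"
  using act.exhaust by auto

lemma sum_inf_prob:
  assumes M: "market_model M" and v: "v \<in> Om M"
  shows "(\<Sum>a\<in>{Buy, Sell, NoTrade}. inf_prob M \<mu> A B a v) = 1"
proof -
  interpret prob_space "signal_meas M v" by (rule prob_space_signal_meas[OF M v])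
  let ?F = "\<lambda>a. {s. informed_act (post_mean M \<mu> s) A B = a}"
  have "ennreal (\<Sum>a\<in>{Buy, Sell, NoTrade}. inf_prob M \<mu> A B a v)
      = (\<Sum>a\<in>UNIV. emeasure (signal_meas M v) (?F a))"
    unfolding UNIV_act emeasure_signal_meas_informed_act[OF M v]
    using inf_prob_nonneg[OF M v] by (simp add: sum_ennreal)
  also have "\<dots> = emeasure (signal_meas M v) (\<Union>a. ?F a)"
    using sets_informed_act_eq[OF M]
    by (intro sum_emeasure) (auto simp: disjoint_family_on_def signal_meas_def UNIV_act)
  also have "(\<Union>a. ?F a) = space (signal_meas M v)" by (auto simp: signal_meas_def)
  finally show ?thesis using emeasure_space_1 by simp
qed

lemma sum_act_prob:
  assumes "market_model M" "v \<in> Om M"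
  shows "(\<Sum>a\<in>{Buy, Sell, NoTrade}. act_prob M \<mu> A B a v) = 1"
proof -
  have "(\<Sum>a\<in>{Buy, Sell, NoTrade}. act_prob M \<mu> A B a v)
      = qn M + (1 - qn M) * (\<Sum>a\<in>{Buy, Sell, NoTrade}. inf_prob M \<mu> A B a v)"
    by (simp add: act_prob_def distrib_left)
  then show ?thesis using sum_inf_prob[OF assms, of \<mu> A B] by simp
qed

definition trade_act :: "mkt \<Rightarrow> (real \<Rightarrow> real) \<Rightarrow> real \<Rightarrow> real \<Rightarrow> (bool \<times> act) \<times> real \<Rightarrow> act" where
  "trade_act M \<mu> A B x = (case x of ((noise, na), s) \<Rightarrow>
     if noise then na else informed_act (post_mean M \<mu> s) A B)"

lemma date_act_eq_trade_act:
  "date_act M \<mu>0 h = trade_act M (belief M \<mu>0 h) (askf M \<mu>0 h) (bidf M \<mu>0 h)"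
  by (simp add: date_act_def trade_act_def fun_eq_iff)

abbreviation noise_pmf :: "mkt \<Rightarrow> (bool \<times> act) pmf" where
  "noise_pmf M \<equiv> pair_pmf (bernoulli_pmf (qn M)) (pmf_of_set {Buy, Sell, NoTrade})"

lemma date_meas_eq: "date_meas M v = measure_pmf (noise_pmf M) \<Otimes>\<^sub>M signal_meas M v"
  by (simp add: date_meas_def signal_meas_def)

lemma space_date_meas [simp]: "space (date_meas M v) = UNIV"
  by (simp add: date_meas_eq space_pair_measure signal_meas_def)

lemma prob_space_date_meas:
  assumes "market_model M" "v \<in> Om M"
  shows "prob_space (date_meas M v)"
  unfolding date_meas_eq using prob_space_signal_meas[OF assms]
  by (intro prob_space_pair) (auto simp: prob_space_measure_pmf)

lemma measurable_trade_act:
  assumes M: "market_model M"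
  shows "trade_act M \<mu> A B \<in> date_meas M v \<rightarrow>\<^sub>M count_space UNIV"
proof -
  have "trade_act M \<mu> A B
      = (\<lambda>x. if fst (fst x) then snd (fst x) else informed_act (post_mean M \<mu> (snd x)) A B)"
    by (auto simp: trade_act_def fun_eq_iff split: prod.splits)
  moreover have "(\<lambda>x. informed_act (post_mean M \<mu> (snd x)) A B) \<in> date_meas M v \<rightarrow>\<^sub>M count_space UNIV"
    unfolding date_meas_eq
    by (rule measurable_compose[OF measurable_snd])
       (simp add: signal_meas_def measurable_informed_act_post_mean[OF M])
  moreover have "(\<lambda>x. snd (fst x)) \<in> date_meas M v \<rightarrow>\<^sub>M count_space UNIV"
    unfolding date_meas_eq by (rule measurable_compose[OF measurable_fst]) simp
  moreover have "(\<lambda>x. fst (fst x)) \<in> date_meas M v \<rightarrow>\<^sub>M count_space UNIV"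
    unfolding date_meas_eq by (rule measurable_compose[OF measurable_fst]) simp
  then have "Measurable.pred (date_meas M v) (\<lambda>x. fst (fst x))"
    by (simp add: pred_def measurable_count_space_eq2)
  ultimately show ?thesis using measurable_If[unfolded pred_def[symmetric]] by simp
qed

lemma sets_trade_act_eq:
  assumes "market_model M"
  shows "{x. trade_act M \<mu> A B x = a} \<in> sets (date_meas M v)"
  using measurable_sets[OF measurable_trade_act[OF assms], of "{a}"] by (simp add: vimage_def)

lemma emeasure_trade_act_eq:
  assumes M: "market_model M" and v: "v \<in> Om M"
  shows "emeasure (date_meas M v) {x. trade_act M \<mu> A B x = a} = ennreal (act_prob M \<mu> A B a v)"
proof -
  interpret N: prob_space "signal_meas M v" by (rule prob_space_signal_meas[OF M v])
  define G where "G y = (if fst y then (if snd y = a then 1 else 0) else inf_prob M \<mu> A B a v)" for y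
  have sets: "{x. trade_act M \<mu> A B x = a} \<in> sets (measure_pmf (noise_pmf M) \<Otimes>\<^sub>M signal_meas M v)"
    using sets_trade_act_eq[OF M] by (simp add: date_meas_eq)
  have slice: "emeasure (signal_meas M v) (Pair y -` {x. trade_act M \<mu> A B x = a}) = ennreal (G y)" for y
  proof (cases "fst y")
    case True
    then show ?thesis using N.emeasure_space_1
      by (cases y) (auto simp: G_def trade_act_def signal_meas_def)
  next
    case False
    then have "Pair y -` {x. trade_act M \<mu> A B x = a} = {s. informed_act (post_mean M \<mu> s) A B = a}"
      by (cases y) (auto simp: trade_act_def)
    then show ?thesis using False emeasure_signal_meas_informed_act[OF M v] by (simp add: G_def)
  qed
  have "emeasure (date_meas M v) {x. trade_act M \<mu> A B x = a}
      = (\<integral>\<^sup>+y. ennreal (G y) \<partial>measure_pmf (noise_pmf M))"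
    unfolding date_meas_eq N.emeasure_pair_measure_alt[OF sets] slice ..
  also have "\<dots> = ennreal (\<integral>y. G y \<partial>measure_pmf (noise_pmf M))"
    using inf_prob_nonneg[OF M v]
    by (intro nn_integral_eq_integral integrable_measure_pmf_finite) (auto simp: G_def)
  also have "(\<integral>y. G y \<partial>measure_pmf (noise_pmf M))
      = (\<Sum>y\<in>UNIV \<times> {Buy, Sell, NoTrade}. pmf (noise_pmf M) y *\<^sub>R G y)"
    by (rule integral_measure_pmf) auto
  also have "\<dots> = act_prob M \<mu> A B a v"
    using M unfolding market_model_def
    by (cases a) (simp_all add: act_prob_def G_def UNIV_bool pmf_pair field_simps)
  finally show ?thesis .
qed

lemma nn_integral_trade_act:
  assumes M: "market_model M" and v: "v \<in> Om M"
  shows "(\<integral>\<^sup>+x. f (trade_act M \<mu> A B x) \<partial>date_meas M v)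
       = (\<Sum>a\<in>{Buy, Sell, NoTrade}. f a * ennreal (act_prob M \<mu> A B a v))"
proof -
  have split: "f (trade_act M \<mu> A B x)
      = (\<Sum>a\<in>{Buy, Sell, NoTrade}. f a * indicator {x. trade_act M \<mu> A B x = a} x)" for x
    by (cases "trade_act M \<mu> A B x") (auto simp: indicator_def)
  have "(\<integral>\<^sup>+x. f (trade_act M \<mu> A B x) \<partial>date_meas M v)
      = (\<Sum>a\<in>{Buy, Sell, NoTrade}. \<integral>\<^sup>+x. f a * indicator {x. trade_act M \<mu> A B x = a} x \<partial>date_meas M v)"
    unfolding split using sets_trade_act_eq[OF M] by (intro nn_integral_sum) auto
  also have "\<dots> = (\<Sum>a\<in>{Buy, Sell, NoTrade}. f a * ennreal (act_prob M \<mu> A B a v))"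
    using sets_trade_act_eq[OF M] emeasure_trade_act_eq[OF M v]
    by (simp add: nn_integral_cmult_indicator)
  finally show ?thesis .
qed

text \<open>Peeling off the first date of the stream, rather than the last as \<^const>\<open>hist\<close> does,
  matches the recursion of \<^const>\<open>stream_space\<close>.\<close>
fun hist_from :: "mkt \<Rightarrow> (real \<Rightarrow> real) \<Rightarrow> act list \<Rightarrow> ((bool \<times> act) \<times> real) stream \<Rightarrow> nat \<Rightarrow> act list" where
  "hist_from M \<mu>0 h X 0 = h"
| "hist_from M \<mu>0 h X (Suc n) = hist_from M \<mu>0 (date_act M \<mu>0 h (shd X) # h) (stl X) n"

lemma hist_from_Suc_last:
  "hist_from M \<mu>0 h X (Suc n) = date_act M \<mu>0 (hist_from M \<mu>0 h X n) (X !! n) # hist_from M \<mu>0 h X n"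
  by (induction n arbitrary: h X) auto

lemma hist_eq_hist_from: "hist M \<mu>0 X n = hist_from M \<mu>0 [] X n"
  by (induction n) (simp_all only: hist.simps hist_from.simps(1) hist_from_Suc_last)

definition likelihood_ratio :: "mkt \<Rightarrow> (real \<Rightarrow> real) \<Rightarrow> real \<Rightarrow> real \<Rightarrow> act list \<Rightarrow> ennreal" where
  "likelihood_ratio M \<mu>0 w' w h = ennreal (belief M \<mu>0 h w' / belief M \<mu>0 h w)"

lemma measurable_likelihood_ratio_hist_from:
  assumes M: "market_model M"
  shows "(\<lambda>X. likelihood_ratio M \<mu>0 w' w (hist_from M \<mu>0 h X n))
           \<in> borel_measurable (stream_space (date_meas M v))"
proof (induction n arbitrary: h)
  case 0
  then show ?case by simp
next
  case (Suc n)
  have act: "(\<lambda>X. date_act M \<mu>0 h (shd X)) \<in> stream_space (date_meas M v) \<rightarrow>\<^sub>M count_space UNIV"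
    unfolding date_act_eq_trade_act
    by (rule measurable_compose[OF measurable_shd measurable_trade_act[OF M]])
  have rest: "(\<lambda>X. likelihood_ratio M \<mu>0 w' w (hist_from M \<mu>0 (a # h) (stl X) n))
      \<in> borel_measurable (stream_space (date_meas M v))" for a
    by (rule measurable_compose[OF measurable_stl Suc.IH])
  show ?case
    using measurable_compose_countable'[OF rest act] by (simp add: UNIV_act)
qed

lemma likelihood_ratio_Cons:
  assumes M: "market_model M" and \<mu>0: "full_support (Om M) \<mu>0"
  shows "likelihood_ratio M \<mu>0 w' w (a # h) = ennreal ((belief M \<mu>0 h w' / belief M \<mu>0 h w)
    * (act_prob M (belief M \<mu>0 h) (askf M \<mu>0 h) (bidf M \<mu>0 h) a w'
       / act_prob M (belief M \<mu>0 h) (askf M \<mu>0 h) (bidf M \<mu>0 h) a w))"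
proof -
  have "0 < (\<Sum>v\<in>Om M. belief M \<mu>0 h v
              * act_prob M (belief M \<mu>0 h) (askf M \<mu>0 h) (bidf M \<mu>0 h) a v)"
    using sum_mult_act_prob_pos[where \<mu> = "belief M \<mu>0 h", OF M belief_pos[OF M \<mu>0]] .
  then show ?thesis by (simp add: likelihood_ratio_def Let_def)
qed

lemma nn_integral_likelihood_ratio_step:
  assumes M: "market_model M" and \<mu>0: "full_support (Om M) \<mu>0"
    and w': "w' \<in> Om M" and w: "w \<in> Om M"
  shows "(\<integral>\<^sup>+x. likelihood_ratio M \<mu>0 w' w (date_act M \<mu>0 h x # h) \<partial>date_meas M w)
       = likelihood_ratio M \<mu>0 w' w h"
proof -
  define r where "r = belief M \<mu>0 h w' / belief M \<mu>0 h w"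
  define p where "p a = act_prob M (belief M \<mu>0 h) (askf M \<mu>0 h) (bidf M \<mu>0 h) a" for a
  have "0 \<le> r" using belief_pos[OF M \<mu>0] w w' by (simp add: r_def less_imp_le)
  have p_pos: "0 < p a v" if "v \<in> Om M" for a v using act_prob_pos[OF M that] by (simp add: p_def)
  have "(\<integral>\<^sup>+x. likelihood_ratio M \<mu>0 w' w (date_act M \<mu>0 h x # h) \<partial>date_meas M w)
      = (\<integral>\<^sup>+x. (\<lambda>a. likelihood_ratio M \<mu>0 w' w (a # h))
            (trade_act M (belief M \<mu>0 h) (askf M \<mu>0 h) (bidf M \<mu>0 h) x) \<partial>date_meas M w)"
    by (simp add: date_act_eq_trade_act)
  also have "\<dots> = (\<Sum>a\<in>{Buy, Sell, NoTrade}. likelihood_ratio M \<mu>0 w' w (a # h) * ennreal (p a w))"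
    unfolding p_def by (rule nn_integral_trade_act[OF M w])
  also have "\<dots> = (\<Sum>a\<in>{Buy, Sell, NoTrade}. ennreal (r * (p a w' / p a w)) * ennreal (p a w))"
    by (simp add: likelihood_ratio_Cons[OF M \<mu>0] r_def p_def)
  also have "\<dots> = (\<Sum>a\<in>{Buy, Sell, NoTrade}. ennreal (r * p a w'))"
    using \<open>0 \<le> r\<close> p_pos[OF w] p_pos[OF w'] p_pos[OF w, THEN less_imp_neq, symmetric]
    by (intro sum.cong refl) (simp add: ennreal_mult'[symmetric] less_imp_le)
  also have "\<dots> = ennreal (\<Sum>a\<in>{Buy, Sell, NoTrade}. r * p a w')"
    using \<open>0 \<le> r\<close> p_pos[OF w'] by (intro sum_ennreal) (auto intro!: mult_nonneg_nonneg intro: less_imp_le)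
  also have "(\<Sum>a\<in>{Buy, Sell, NoTrade}. r * p a w') = r"
    using sum_act_prob[OF M w'] unfolding p_def sum_distrib_left[symmetric] by simp
  also have "ennreal r = likelihood_ratio M \<mu>0 w' w h"
    by (simp add: likelihood_ratio_def r_def)
  finally show ?thesis .
qed

lemma nn_integral_likelihood_ratio_hist_from:
  assumes M: "market_model M" and \<mu>0: "full_support (Om M) \<mu>0"
    and w': "w' \<in> Om M" and w: "w \<in> Om M"
  shows "(\<integral>\<^sup>+X. likelihood_ratio M \<mu>0 w' w (hist_from M \<mu>0 h X n) \<partial>stream_space (date_meas M w))
       = likelihood_ratio M \<mu>0 w' w h"
proof -
  interpret D: prob_space "date_meas M w" by (rule prob_space_date_meas[OF M w])
  interpret S: prob_space "stream_space (date_meas M w)" by (rule D.prob_space_stream_space)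
  show ?thesis
  proof (induction n arbitrary: h)
    case 0
    show ?case by (simp add: S.emeasure_space_1)
  next
    case (Suc n)
    have "(\<integral>\<^sup>+X. likelihood_ratio M \<mu>0 w' w (hist_from M \<mu>0 h X (Suc n)) \<partial>stream_space (date_meas M w))
        = (\<integral>\<^sup>+x. (\<integral>\<^sup>+X. likelihood_ratio M \<mu>0 w' w (hist_from M \<mu>0 h (x ## X) (Suc n))
                    \<partial>stream_space (date_meas M w)) \<partial>date_meas M w)"
      by (rule D.nn_integral_stream_space[OF measurable_likelihood_ratio_hist_from[OF M]])
    also have "\<dots> = (\<integral>\<^sup>+x. likelihood_ratio M \<mu>0 w' w (date_act M \<mu>0 h x # h) \<partial>date_meas M w)"
      by (simp add: Suc.IH)
    also have "\<dots> = likelihood_ratio M \<mu>0 w' w h"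
      by (rule nn_integral_likelihood_ratio_step[OF M \<mu>0 w' w])
    finally show ?case .
  qed
qed

lemma AE_liminf_finite_if_nn_integral_bounded:
  assumes meas: "\<And>n. f n \<in> borel_measurable M"
    and bound: "\<And>n. (\<integral>\<^sup>+x. f n x \<partial>M) \<le> C" and "C < \<infinity>"
  shows "AE x in M. liminf (\<lambda>n. f n x) \<noteq> \<infinity>"
proof (rule nn_integral_PInf_AE)
  show "(\<lambda>x. liminf (\<lambda>n. f n x)) \<in> borel_measurable M"
    using meas by (rule borel_measurable_liminf)
  have "(\<integral>\<^sup>+x. liminf (\<lambda>n. f n x) \<partial>M) \<le> liminf (\<lambda>n. \<integral>\<^sup>+x. f n x \<partial>M)"
    by (rule nn_integral_liminf[OF meas])
  also have "\<dots> \<le> C"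
    using bound by (intro Liminf_le) auto
  finally show "(\<integral>\<^sup>+x. liminf (\<lambda>n. f n x) \<partial>M) \<noteq> \<infinity>"
    using \<open>C < \<infinity>\<close> by auto
qed

lemma ratio_tendsto_top_if_sum_le_1:
  fixes a b :: "nat \<Rightarrow> real"
  assumes a: "a \<longlonglongrightarrow> 1" and b_pos: "\<And>n. 0 < b n" and sum_le: "\<And>n. a n + b n \<le> 1"
  shows "(\<lambda>n. ennreal (a n / b n)) \<longlonglongrightarrow> \<infinity>"
proof -
  have "b \<longlonglongrightarrow> 0"
  proof (rule tendsto_sandwich[of "\<lambda>_. 0" _ _ "\<lambda>n. 1 - a n"])
    show "(\<lambda>n. 1 - a n) \<longlonglongrightarrow> 0" using tendsto_diff[OF tendsto_const a, of 1] by simp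
  qed (use b_pos sum_le in \<open>auto intro!: always_eventually less_imp_le simp: algebra_simps\<close>)
  then have "filterlim (\<lambda>n. a n / b n) at_top sequentially"
    using b_pos by (intro LIM_at_top_divide[OF a]) auto
  then show ?thesis by (simp add: ennreal_tendsto_top_eq_at_top)
qed

theorem lemma5:
  fixes M :: mkt and \<mu>0 :: "real \<Rightarrow> real" and w_star w :: real
  assumes "market_model M"
    and "full_support (Om M) \<mu>0"
    and "w_star \<in> Om M"
    and "w \<in> Om M"
    and "\<forall>\<mu>. full_support (Om M) \<mu> \<longrightarrow>
           (\<forall>v\<in>Om M. AE xs in stream_space (date_meas M v).
              \<forall>u\<in>Om M. (\<lambda>n. pub_belief M \<mu> xs n u) \<longlonglongrightarrow> 0 \<or>
                        (\<lambda>n. pub_belief M \<mu> xs n u) \<longlonglongrightarrow> 1)"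
  shows "AE xs in stream_space (date_meas M w).
           (\<lambda>n. pub_belief M \<mu>0 xs n w_star) \<longlonglongrightarrow> 1 \<longrightarrow> w_star = w"
proof -
  note M = assms(1) and \<mu>0 = assms(2) and w_star = assms(3) and w = assms(4)
  let ?R = "\<lambda>n X. likelihood_ratio M \<mu>0 w_star w (hist M \<mu>0 X n)"
  have liminf_finite: "AE X in stream_space (date_meas M w). liminf (\<lambda>n. ?R n X) \<noteq> \<infinity>"
  proof (rule AE_liminf_finite_if_nn_integral_bounded)
    show "?R n \<in> borel_measurable (stream_space (date_meas M w))" for n
      unfolding hist_eq_hist_from by (rule measurable_likelihood_ratio_hist_from[OF M])
    show "(\<integral>\<^sup>+X. ?R n X \<partial>stream_space (date_meas M w)) \<le> likelihood_ratio M \<mu>0 w_star w []" for n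
      unfolding hist_eq_hist_from nn_integral_likelihood_ratio_hist_from[OF M \<mu>0 w_star w] ..
    show "likelihood_ratio M \<mu>0 w_star w [] < \<infinity>"
      by (simp add: likelihood_ratio_def)
  qed
  show ?thesis
  proof (rule eventually_mono[OF liminf_finite], rule impI, rule ccontr)
    fix X assume finite: "liminf (\<lambda>n. ?R n X) \<noteq> \<infinity>"
      and to_1: "(\<lambda>n. pub_belief M \<mu>0 X n w_star) \<longlonglongrightarrow> 1" and "w_star \<noteq> w"
    have "(\<lambda>n. ennreal (pub_belief M \<mu>0 X n w_star / pub_belief M \<mu>0 X n w)) \<longlonglongrightarrow> \<infinity>"
      using belief_pos[OF M \<mu>0 w] belief_add_le_1[OF M \<mu>0 w_star w \<open>w_star \<noteq> w\<close>]
      unfolding pub_belief_def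
      by (intro ratio_tendsto_top_if_sum_le_1[OF to_1[unfolded pub_belief_def]])
    then have "(\<lambda>n. ?R n X) \<longlonglongrightarrow> \<infinity>"
      by (simp add: likelihood_ratio_def pub_belief_def)
    then have "liminf (\<lambda>n. ?R n X) = \<infinity>"
      by (intro lim_imp_Liminf) auto
    then show False using finite by simp
  qed
qed

end
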